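(* A linkage matching field is uniquely determined by its set of Chow covectors: if $\mathcal{M}$ and $\mathcal{M}'$ are linkage $(n,d)$-matching fields on $L\sqcup R$ ($n\ge d$) with $\{\Omega_\rho(\mathcal{M})\}_\rho=\{\Omega_\rho(\mathcal{M}')\}_\rho$, then $\mathcal{M}=\mathcal{M}'$.
   Context: $L=\{\ell_1,\dots,\ell_n\}$, $R=\{r_1,\dots,r_d\}$; graphs are bipartite on $L\sqcup R$ identified with edge sets. An $(n,d)$-matching field $\mathcal{M}=(M_\sigma)$ assigns to each $d$-subset $\sigma\subseteq L$ a perfect matching $M_\sigma$ between $\sigma$ and $R$; it is linkage if for every $r_i\in R$ and every $(d+1)$-subset $\tau\subseteq L$ there exist distinct $\ell_j,\ell_{j'}\in\tau$ with $M_{\tau\setminus\{\ell_j\}}$ and $M_{\tau\setminus\{\ell_{j'}\}}$ agreeing except on the edges incident with $r_i$. For an $(n-d+1)$-subset $\rho\subseteq L$, the Chow covector $\Omega_\rho(\mathcal{M})$ is the graph with edges $(\ell_j,r)$ for $\ell_j\in\rho$, where $r$ is the node matched to $\ell_j$ in $M_{(L\setminus\rho)\cup\{\ell_j\}}$. *)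

theory Defs
  imports Main
begin

text \<open>Left nodes l_1..l_n are encoded as 0..<n, right nodes r_1..r_d as 0..<d.
  A bipartite graph is its edge set, a set of pairs (left node, right node).\<close>

definition Lnodes :: "nat \<Rightarrow> nat set" where "Lnodes n = {0..<n}"
definition Rnodes :: "nat \<Rightarrow> nat set" where "Rnodes d = {0..<d}"

definition perfect_matching :: "nat set \<Rightarrow> nat set \<Rightarrow> (nat \<times> nat) set \<Rightarrow> bool" where
  "perfect_matching S T E \<longleftrightarrow>
     E \<subseteq> S \<times> T \<and>
     (\<forall>l\<in>S. \<exists>!r. (l, r) \<in> E) \<and>
     (\<forall>r\<in>T. \<exists>!l. (l, r) \<in> E)"

text \<open>An (n,d)-matching field: to every d-subset sigma of L a perfect matching
  between sigma and R (values on other sets are irrelevant).\<close>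
definition matching_field :: "nat \<Rightarrow> nat \<Rightarrow> (nat set \<Rightarrow> (nat \<times> nat) set) \<Rightarrow> bool" where
  "matching_field n d M \<longleftrightarrow>
     (\<forall>\<sigma>. \<sigma> \<subseteq> Lnodes n \<and> card \<sigma> = d \<longrightarrow> perfect_matching \<sigma> (Rnodes d) (M \<sigma>))"

definition incident_right :: "nat \<Rightarrow> (nat \<times> nat) set" where
  "incident_right i = {e. snd e = i}"

definition linkage :: "nat \<Rightarrow> nat \<Rightarrow> (nat set \<Rightarrow> (nat \<times> nat) set) \<Rightarrow> bool" where
  "linkage n d M \<longleftrightarrow>
     (\<forall>i\<in>Rnodes d. \<forall>\<tau>. \<tau> \<subseteq> Lnodes n \<and> card \<tau> = d + 1 \<longrightarrow>
        (\<exists>j\<in>\<tau>. \<exists>j'\<in>\<tau>. j \<noteq> j' \<and>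
           M (\<tau> - {j}) - incident_right i = M (\<tau> - {j'}) - incident_right i))"

definition linkage_matching_field :: "nat \<Rightarrow> nat \<Rightarrow> (nat set \<Rightarrow> (nat \<times> nat) set) \<Rightarrow> bool" where
  "linkage_matching_field n d M \<longleftrightarrow> matching_field n d M \<and> linkage n d M"

definition chow_covector :: "nat \<Rightarrow> (nat set \<Rightarrow> (nat \<times> nat) set) \<Rightarrow> nat set \<Rightarrow> (nat \<times> nat) set" where
  "chow_covector n M \<rho> = {(l, r). l \<in> \<rho> \<and> (l, r) \<in> M ((Lnodes n - \<rho>) \<union> {l})}"

definition chow_covectors :: "nat \<Rightarrow> nat \<Rightarrow> (nat set \<Rightarrow> (nat \<times> nat) set) \<Rightarrow> (nat \<times> nat) set set" where
  "chow_covectors n d M =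
     {chow_covector n M \<rho> | \<rho>. \<rho> \<subseteq> Lnodes n \<and> card \<rho> = n - d + 1}"

end

theory Submission
  imports Defs
begin

text \<open>The Chow covector of \<open>\<rho>\<close> has left vertex set \<open>\<rho>\<close>, so the unlabelled set of Chow covectors
  still remembers which \<open>\<rho>\<close> each covector belongs to. Every edge \<open>(l, r)\<close> of \<open>M \<sigma>\<close> lies in the
  covector of \<open>\<rho> = (L - \<sigma>) \<union> {l}\<close>, and conversely that covector's edge at \<open>l\<close> is read off from
  \<open>M \<sigma>\<close>. Hence the Chow covectors determine every matching \<open>M \<sigma>\<close>.\<close>

lemma Diff_insert_complement:
  assumes "\<sigma> \<subseteq> U" "l \<in> \<sigma>"
  shows "(U - ((U - \<sigma>) \<union> {l})) \<union> {l} = \<sigma>"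
  using assms by auto

lemma card_complement_insert:
  assumes "finite U" "\<sigma> \<subseteq> U" "l \<in> \<sigma>"
  shows "card ((U - \<sigma>) \<union> {l}) = card U - card \<sigma> + 1"
proof -
  have "finite \<sigma>" using assms(1,2) finite_subset by blast
  then have "card (U - \<sigma>) = card U - card \<sigma>" using assms(2) by (rule card_Diff_subset)
  then show ?thesis using assms by (simp add: card_Un_disjoint)
qed

lemma mem_chow_covector_complement_insert:
  assumes "\<sigma> \<subseteq> Lnodes n" "l \<in> \<sigma>"
  shows "(l, r) \<in> chow_covector n M ((Lnodes n - \<sigma>) \<union> {l}) \<longleftrightarrow> (l, r) \<in> M \<sigma>"
  using Diff_insert_complement[OF assms] by (simp add: chow_covector_def)

lemma Domain_chow_covector:
  assumes mf: "matching_field n d M" and "d \<le> n"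
    and \<rho>: "\<rho> \<subseteq> Lnodes n" "card \<rho> = n - d + 1"
  shows "Domain (chow_covector n M \<rho>) = \<rho>"
proof
  show "Domain (chow_covector n M \<rho>) \<subseteq> \<rho>" by (auto simp: chow_covector_def)
  show "\<rho> \<subseteq> Domain (chow_covector n M \<rho>)"
  proof
    fix l assume l: "l \<in> \<rho>"
    define \<sigma> where "\<sigma> = (Lnodes n - \<rho>) \<union> {l}"
    have fin: "finite (Lnodes n)" by (simp add: Lnodes_def)
    have "card \<rho> \<le> n" using card_mono[OF fin \<rho>(1)] by (simp add: Lnodes_def)
    then have "card \<sigma> = d"
      using card_complement_insert[OF fin \<rho>(1) l] \<rho>(2) \<open>d \<le> n\<close> by (simp add: \<sigma>_def Lnodes_def)
    moreover have "\<sigma> \<subseteq> Lnodes n" using l \<rho>(1) by (auto simp: \<sigma>_def)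
    ultimately have "perfect_matching \<sigma> (Rnodes d) (M \<sigma>)"
      using mf by (simp add: matching_field_def)
    then obtain r where "(l, r) \<in> M \<sigma>" by (auto simp: perfect_matching_def \<sigma>_def)
    then have "(l, r) \<in> chow_covector n M \<rho>" using l by (simp add: chow_covector_def \<sigma>_def)
    then show "l \<in> Domain (chow_covector n M \<rho>)" by blast
  qed
qed

lemma matching_subset_if_chow_covectors_subset:
  assumes "d \<le> n" and mf: "matching_field n d M" and mf': "matching_field n d M'"
    and sub: "chow_covectors n d M \<subseteq> chow_covectors n d M'"
    and \<sigma>: "\<sigma> \<subseteq> Lnodes n" "card \<sigma> = d"
  shows "M \<sigma> \<subseteq> M' \<sigma>"
proof
  fix e assume e: "e \<in> M \<sigma>"
  obtain l r where lr: "e = (l, r)" by (cases e)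
  have "perfect_matching \<sigma> (Rnodes d) (M \<sigma>)" using mf \<sigma> by (simp add: matching_field_def)
  then have l: "l \<in> \<sigma>" using e lr by (auto simp: perfect_matching_def)
  define \<rho> where "\<rho> = (Lnodes n - \<sigma>) \<union> {l}"
  have \<rho>_sub: "\<rho> \<subseteq> Lnodes n" using l \<sigma>(1) by (auto simp: \<rho>_def)
  have \<rho>_card: "card \<rho> = n - d + 1"
    using card_complement_insert[of "Lnodes n", OF _ \<sigma>(1) l] \<sigma>(2) by (simp add: \<rho>_def Lnodes_def)
  have "chow_covector n M \<rho> \<in> chow_covectors n d M'"
    using sub \<rho>_sub \<rho>_card by (auto simp: chow_covectors_def)
  then obtain \<rho>' where \<rho>': "\<rho>' \<subseteq> Lnodes n" "card \<rho>' = n - d + 1"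
    and eq: "chow_covector n M \<rho> = chow_covector n M' \<rho>'"
    by (auto simp: chow_covectors_def)
  have "\<rho>' = \<rho>"
    using Domain_chow_covector[OF mf' \<open>d \<le> n\<close> \<rho>'] Domain_chow_covector[OF mf \<open>d \<le> n\<close> \<rho>_sub \<rho>_card]
      eq by simp
  with eq have "chow_covector n M \<rho> = chow_covector n M' \<rho>" by simp
  then show "e \<in> M' \<sigma>"
    using e lr mem_chow_covector_complement_insert[OF \<sigma>(1) l] unfolding \<rho>_def by metis
qed

theorem corollary3p24:
  fixes n d :: nat and M M' :: "nat set \<Rightarrow> (nat \<times> nat) set"
  assumes "n \<ge> d"
    and "linkage_matching_field n d M"
    and "linkage_matching_field n d M'"
    and "chow_covectors n d M = chow_covectors n d M'"
  shows "\<forall>\<sigma>. \<sigma> \<subseteq> Lnodes n \<and> card \<sigma> = d \<longrightarrow> M \<sigma> = M' \<sigma>"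
proof (intro allI impI)
  fix \<sigma> assume \<sigma>: "\<sigma> \<subseteq> Lnodes n \<and> card \<sigma> = d"
  have mf: "matching_field n d M" "matching_field n d M'"
    using assms(2,3) by (simp_all add: linkage_matching_field_def)
  show "M \<sigma> = M' \<sigma>"
  proof
    show "M \<sigma> \<subseteq> M' \<sigma>"
      using matching_subset_if_chow_covectors_subset[OF assms(1) mf] assms(4) \<sigma> by blast
    show "M' \<sigma> \<subseteq> M \<sigma>"
      using matching_subset_if_chow_covectors_subset[OF assms(1) mf(2,1)] assms(4) \<sigma> by blast
  qed
qed

end
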